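(* In the setting described in the context, for any vector $\boldsymbol{c}=(c_1,c_2)$ of positive integers and all $\theta_1,\theta_2\in\mathbb{R}$, $$\mathrm{cp}(A_{*,*}(\theta_1,\theta_2))=\mathrm{cp}\big({}^{\boldsymbol{c}}\!A_{*,*}(c_1\theta_1,c_2\theta_2)\big).$$
   Context: Let $S_0=\{1,\dots,s_0\}$ be finite and $A_{k,l}$, $k,l\in\{-1,0,1\}$, nonnegative $s_0\times s_0$ matrices with $\sum A_{k,l}$ stochastic; they are the transition blocks of a Markov chain $\{\boldsymbol{Y}_n\}$ on $\mathbb{Z}^2\times S_0$ with $\mathbb{P}(\boldsymbol{Y}_{n+1}=(x_1+k,x_2+l,j')\mid\boldsymbol{Y}_n=(x_1,x_2,j))=[A_{k,l}]_{j,j'}$ (no other transitions). Let $\mathbb{S}_+=\mathbb{Z}_+^2\times S_0$, $P_+$ the restriction of the transition matrix to $\mathbb{S}_+$, $\boldsymbol\pi_{*,*}$ the stationary distribution of $\sum A_{k,l}$, $a_1=\boldsymbol{\pi}_{*,*}\sum_l(A_{1,l}-A_{-1,l})\mathbf{1}$, $a_2=\boldsymbol{\pi}_{*,*}\sum_k(A_{k,1}-A_{k,-1})\mathbf{1}$. Standing assumptions: $\{\boldsymbol Y_n\}$ irreducible and aperiodic; $a_1<0$ or $a_2<0$; $P_+$ irreducible. $A_{*,*}(\theta_1,\theta_2)=\sum_{k,l}e^{k\theta_1+l\theta_2}A_{k,l}$. For a nonnegative square matrix $A$, $\mathrm{cp}(A)=\sup\{r\ge0:\sum_nr^nA^n<\infty\text{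 elementwise}\}$. Given $\boldsymbol c$, let $\mathbb{Z}_{0,m}=\{0,1,\dots,m\}$ and for $i,j\in\{-1,0,1\}$ define matrices ${}^{\boldsymbol{c}}\!A_{i,j}$ indexed by $(\mathbb{Z}_{0,c_1-1}\times\mathbb{Z}_{0,c_2-1}\times S_0)^2$ by $[{}^{\boldsymbol{c}}\!A_{i,j}]_{(m_1,m_2,s),(m_1',m_2',s')}=[A_{u_1,u_2}]_{s,s'}$ with $u_1=c_1i+m_1'-m_1$, $u_2=c_2j+m_2'-m_2$, if $u_1,u_2\in\{-1,0,1\}$, and $0$ otherwise (these are the transition blocks of the process $({}^{\boldsymbol c}X_{1,n},{}^{\boldsymbol c}X_{2,n},({}^{\boldsymbol c}M_{1,n},{}^{\boldsymbol c}M_{2,n},J_n))$ where $X_{i,n}=c_i\,{}^{\boldsymbol c}X_{i,n}+{}^{\boldsymbol c}M_{i,n}$, $0\le{}^{\boldsymbol c}M_{i,n}\le c_i-1$). Set ${}^{\boldsymbol{c}}\!A_{*,*}(\theta_1,\theta_2)=\sum_{i,j\in\{-1,0,1\}}e^{i\theta_1+j\theta_2}\,{}^{\boldsymbol{c}}\!A_{i,j}$. *)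

theory Defs
  imports "HOL-Analysis.Analysis"
begin

text \<open>A (possibly infinite) nonnegative matrix is a function I \<Rightarrow> I \<Rightarrow> real;
  we only consider finite index sets here.\<close>

fun matpow :: "'i set \<Rightarrow> ('i \<Rightarrow> 'i \<Rightarrow> real) \<Rightarrow> nat \<Rightarrow> 'i \<Rightarrow> 'i \<Rightarrow> real" where
  "matpow I M 0 = (\<lambda>i j. if i = j then 1 else 0)"
| "matpow I M (Suc n) = (\<lambda>i j. \<Sum>k\<in>I. matpow I M n i k * M k j)"

definition cp :: "'i set \<Rightarrow> ('i \<Rightarrow> 'i \<Rightarrow> real) \<Rightarrow> ereal" where
  "cp I M = Sup {ereal r | r. r \<ge> 0 \<and>
      (\<forall>i\<in>I. \<forall>j\<in>I. summable (\<lambda>n. r ^ n * matpow I M n i j))}"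

text \<open>Transition blocks: A k l s s' = [A_{k,l}]_{s,s'}, only k,l \<in> {-1,0,1} are used.
  The phase space S0 is a finite (nonempty) type 's.\<close>

definition dirs :: "int set" where "dirs = {-1, 0, 1}"

definition blocks_ok :: "(int \<Rightarrow> int \<Rightarrow> 's::finite \<Rightarrow> 's \<Rightarrow> real) \<Rightarrow> bool" where
  "blocks_ok A \<longleftrightarrow> (\<forall>k\<in>dirs. \<forall>l\<in>dirs. \<forall>s s'. A k l s s' \<ge> 0)
     \<and> (\<forall>s. (\<Sum>k\<in>dirs. \<Sum>l\<in>dirs. \<Sum>s'\<in>UNIV. A k l s s') = 1)"

definition transP :: "(int \<Rightarrow> int \<Rightarrow> 's::finite \<Rightarrow> 's \<Rightarrow> real)
    \<Rightarrow> (int \<times> int \<times> 's) \<Rightarrow> (int \<times> int \<times> 's) \<Rightarrow> real" where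
  "transP A = (\<lambda>(x1, x2, j) (y1, y2, j').
     if y1 - x1 \<in> dirs \<and> y2 - x2 \<in> dirs then A (y1 - x1) (y2 - x2) j j' else 0)"

definition edges :: "'a set \<Rightarrow> ('a \<Rightarrow> 'a \<Rightarrow> real) \<Rightarrow> ('a \<times> 'a) set" where
  "edges S P = {(x, y). x \<in> S \<and> y \<in> S \<and> P x y > 0}"

definition irreducible_on :: "'a set \<Rightarrow> ('a \<Rightarrow> 'a \<Rightarrow> real) \<Rightarrow> bool" where
  "irreducible_on S P \<longleftrightarrow> (\<forall>x\<in>S. \<forall>y\<in>S. (x, y) \<in> (edges S P)\<^sup>*)"

definition aperiodic_on :: "'a set \<Rightarrow> ('a \<Rightarrow> 'a \<Rightarrow> real) \<Rightarrow> bool" where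
  "aperiodic_on S P \<longleftrightarrow> (\<forall>x\<in>S. Gcd {n. n > 0 \<and> (x, x) \<in> (edges S P) ^^ n} = 1)"

definition Splus :: "(int \<times> int \<times> 's) set" where
  "Splus = {(x1, x2, j). x1 \<ge> 0 \<and> x2 \<ge> 0}"

definition stationary :: "(int \<Rightarrow> int \<Rightarrow> 's::finite \<Rightarrow> 's \<Rightarrow> real) \<Rightarrow> ('s \<Rightarrow> real) \<Rightarrow> bool" where
  "stationary A \<pi> \<longleftrightarrow> (\<forall>s. \<pi> s \<ge> 0) \<and> (\<Sum>s\<in>UNIV. \<pi> s) = 1
     \<and> (\<forall>s'. (\<Sum>s\<in>UNIV. \<pi> s * (\<Sum>k\<in>dirs. \<Sum>l\<in>dirs. A k l s s')) = \<pi> s')"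

definition drift1 :: "(int \<Rightarrow> int \<Rightarrow> 's::finite \<Rightarrow> 's \<Rightarrow> real) \<Rightarrow> ('s \<Rightarrow> real) \<Rightarrow> real" where
  "drift1 A \<pi> = (\<Sum>s\<in>UNIV. \<pi> s * (\<Sum>s'\<in>UNIV. \<Sum>l\<in>dirs. A 1 l s s' - A (-1) l s s'))"

definition drift2 :: "(int \<Rightarrow> int \<Rightarrow> 's::finite \<Rightarrow> 's \<Rightarrow> real) \<Rightarrow> ('s \<Rightarrow> real) \<Rightarrow> real" where
  "drift2 A \<pi> = (\<Sum>s\<in>UNIV. \<pi> s * (\<Sum>s'\<in>UNIV. \<Sum>k\<in>dirs. A k 1 s s' - A k (-1) s s'))"

definition Astar :: "(int \<Rightarrow> int \<Rightarrow> 's::finite \<Rightarrow> 's \<Rightarrow> real) \<Rightarrow> real \<Rightarrow> real \<Rightarrow> 's \<Rightarrow> 's \<Rightarrow> real" where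
  "Astar A \<theta>1 \<theta>2 = (\<lambda>s s'. \<Sum>k\<in>dirs. \<Sum>l\<in>dirs.
      exp (real_of_int k * \<theta>1 + real_of_int l * \<theta>2) * A k l s s')"

definition cIdx :: "nat \<Rightarrow> nat \<Rightarrow> (nat \<times> nat \<times> 's) set" where
  "cIdx c1 c2 = {0..<c1} \<times> {0..<c2} \<times> UNIV"

definition cA :: "(int \<Rightarrow> int \<Rightarrow> 's::finite \<Rightarrow> 's \<Rightarrow> real) \<Rightarrow> nat \<Rightarrow> nat \<Rightarrow> int \<Rightarrow> int
    \<Rightarrow> (nat \<times> nat \<times> 's) \<Rightarrow> (nat \<times> nat \<times> 's) \<Rightarrow> real" where
  "cA A c1 c2 i j = (\<lambda>(m1, m2, s) (m1', m2', s').
     (let u1 = int c1 * i + int m1' - int m1; u2 = int c2 * j + int m2' - int m2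
      in if u1 \<in> dirs \<and> u2 \<in> dirs then A u1 u2 s s' else 0))"

definition cAstar :: "(int \<Rightarrow> int \<Rightarrow> 's::finite \<Rightarrow> 's \<Rightarrow> real) \<Rightarrow> nat \<Rightarrow> nat \<Rightarrow> real \<Rightarrow> real
    \<Rightarrow> (nat \<times> nat \<times> 's) \<Rightarrow> (nat \<times> nat \<times> 's) \<Rightarrow> real" where
  "cAstar A c1 c2 \<theta>1 \<theta>2 = (\<lambda>x y. \<Sum>i\<in>dirs. \<Sum>j\<in>dirs.
      exp (real_of_int i * \<theta>1 + real_of_int j * \<theta>2) * cA A c1 c2 i j x y)"

end

theory Submission
  imports Defs
begin

(* Let C = cA_{*,*}(c1 \<theta>1, c2 \<theta>2) and V((m1, m2, s), s') = exp (m1 \<theta>1 + m2 \<theta>2) if s = s'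
   and 0 otherwise. Then C V = V A_{*,*}(\<theta>1, \<theta>2): summing over the phases (m1', m2') of the
   target and the level shift (i, j) meets every jump (c1 i + m1' - m1, c2 j + m2' - m2) of
   the original walk exactly once, and the exponential weights turn c_k \<theta>_k-scaled level
   shifts back into \<theta>_k-scaled jumps. Hence C^n V = V A_{*,*}^n. All three matrices are
   nonnegative and V has a positive entry in every row and every column, so each entry of
   C^n is dominated by a finite combination of entries of A_{*,*}^n and vice versa; thus the
   same r make both series r^n (.)^n converge. *)

lemma matpow_nonneg:
  assumes "\<And>x y. M x y \<ge> 0"
  shows "matpow I M n x y \<ge> 0"
  using assms by (induction n arbitrary: y) (auto intro!: sum_nonneg)

lemma matpow_intertwine:
  assumes "finite I" "finite J"
    and MV_VN: "\<And>x y. x \<in> I \<Longrightarrow> y \<in> J \<Longrightarrow> (\<Sum>k\<in>I. M x k * V k y) = (\<Sum>k\<in>J. V x k * N k y)"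
    and "x \<in> I" "y \<in> J"
  shows "(\<Sum>k\<in>I. matpow I M n x k * V k y) = (\<Sum>k\<in>J. V x k * matpow J N n k y)"
  using \<open>y \<in> J\<close>
proof (induction n arbitrary: y)
  case 0
  have "(\<Sum>k\<in>I. matpow I M 0 x k * V k y) = (\<Sum>k\<in>I. if k = x then V x y else 0)"
    "(\<Sum>k\<in>J. V x k * matpow J N 0 k y) = (\<Sum>k\<in>J. if k = y then V x y else 0)"
    by (auto intro: sum.cong)
  then show ?case using assms 0 by simp
next
  case (Suc n)
  have "(\<Sum>k\<in>I. matpow I M (Suc n) x k * V k y)
      = (\<Sum>l\<in>I. matpow I M n x l * (\<Sum>k\<in>I. M l k * V k y))"
    by (simp add: sum_distrib_left sum_distrib_right mult.assoc) (rule sum.swap)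
  also have "\<dots> = (\<Sum>l\<in>I. matpow I M n x l * (\<Sum>k\<in>J. V l k * N k y))"
    using MV_VN Suc.prems by simp
  also have "\<dots> = (\<Sum>k\<in>J. (\<Sum>l\<in>I. matpow I M n x l * V l k) * N k y)"
    by (simp add: sum_distrib_left sum_distrib_right mult.assoc) (rule sum.swap)
  also have "\<dots> = (\<Sum>k\<in>J. (\<Sum>l\<in>J. V x l * matpow J N n l k) * N k y)"
    using Suc.IH by simp
  also have "\<dots> = (\<Sum>k\<in>J. V x k * matpow J N (Suc n) k y)"
    by (simp add: sum_distrib_left sum_distrib_right mult.assoc) (rule sum.swap)
  finally show ?case .
qed

lemma summable_matpow_of_intertwined_left:
  assumes "finite I" "finite J"
    and "\<And>x y. x \<in> I \<Longrightarrow> y \<in> J \<Longrightarrow> (\<Sum>k\<in>I. M x k * V k y) = (\<Sum>k\<in>J. V x k * N k y)"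
    and M_nonneg: "\<And>x y. M x y \<ge> 0" and V_nonneg: "\<And>x y. V x y \<ge> 0"
    and row_pos: "\<And>y. y \<in> I \<Longrightarrow> \<exists>j\<in>J. V y j > 0"
    and "r \<ge> 0"
    and summable_N: "\<forall>i\<in>J. \<forall>j\<in>J. summable (\<lambda>n. r ^ n * matpow J N n i j)"
    and "x \<in> I" "y \<in> I"
  shows "summable (\<lambda>n. r ^ n * matpow I M n x y)"
proof -
  obtain j where "j \<in> J" and Vyj: "V y j > 0"
    using row_pos \<open>y \<in> I\<close> by blast
  have dominated: "matpow I M n x y * V y j \<le> (\<Sum>s\<in>J. V x s * matpow J N n s j)" for n
  proof -
    have "matpow I M n x y * V y j \<le> (\<Sum>k\<in>I. matpow I M n x k * V k j)"
      using \<open>finite I\<close> \<open>y \<in> I\<close>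
      by (intro member_le_sum) (auto intro: mult_nonneg_nonneg matpow_nonneg M_nonneg V_nonneg)
    also have "\<dots> = (\<Sum>s\<in>J. V x s * matpow J N n s j)"
      using matpow_intertwine[OF assms(1-3) \<open>x \<in> I\<close> \<open>j \<in> J\<close>] .
    finally show ?thesis .
  qed
  have bound: "r ^ n * matpow I M n x y
      \<le> (\<Sum>s\<in>J. V x s / V y j * (r ^ n * matpow J N n s j))" for n
  proof -
    have "r ^ n * matpow I M n x y \<le> r ^ n * ((\<Sum>s\<in>J. V x s * matpow J N n s j) / V y j)"
      using dominated[of n] Vyj \<open>r \<ge> 0\<close> by (intro mult_left_mono) (simp_all add: pos_le_divide_eq)
    also have "\<dots> = (\<Sum>s\<in>J. V x s / V y j * (r ^ n * matpow J N n s j))"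
      by (simp add: sum_divide_distrib sum_distrib_left mult_ac)
    finally show ?thesis .
  qed
  show ?thesis
  proof (rule summable_comparison_test')
    show "summable (\<lambda>n. \<Sum>s\<in>J. V x s / V y j * (r ^ n * matpow J N n s j))"
      using summable_N \<open>j \<in> J\<close> by (intro summable_sum summable_mult) auto
    show "norm (r ^ n * matpow I M n x y) \<le> (\<Sum>s\<in>J. V x s / V y j * (r ^ n * matpow J N n s j))"
      for n
      using bound[of n] \<open>r \<ge> 0\<close> by (simp add: matpow_nonneg M_nonneg)
  qed
qed

lemma summable_matpow_of_intertwined_right:
  assumes "finite I" "finite J"
    and "\<And>x y. x \<in> I \<Longrightarrow> y \<in> J \<Longrightarrow> (\<Sum>k\<in>I. M x k * V k y) = (\<Sum>k\<in>J. V x k * N k y)"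
    and N_nonneg: "\<And>x y. N x y \<ge> 0" and V_nonneg: "\<And>x y. V x y \<ge> 0"
    and col_pos: "\<And>i. i \<in> J \<Longrightarrow> \<exists>x\<in>I. V x i > 0"
    and "r \<ge> 0"
    and summable_M: "\<forall>x\<in>I. \<forall>y\<in>I. summable (\<lambda>n. r ^ n * matpow I M n x y)"
    and "i \<in> J" "j \<in> J"
  shows "summable (\<lambda>n. r ^ n * matpow J N n i j)"
proof -
  obtain x where "x \<in> I" and Vxi: "V x i > 0"
    using col_pos \<open>i \<in> J\<close> by blast
  have dominated: "V x i * matpow J N n i j \<le> (\<Sum>k\<in>I. matpow I M n x k * V k j)" for n
  proof -
    have "V x i * matpow J N n i j \<le> (\<Sum>s\<in>J. V x s * matpow J N n s j)"
      using \<open>finite J\<close> \<open>i \<in> J\<close>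
      by (intro member_le_sum) (auto intro: mult_nonneg_nonneg matpow_nonneg N_nonneg V_nonneg)
    also have "\<dots> = (\<Sum>k\<in>I. matpow I M n x k * V k j)"
      using matpow_intertwine[OF assms(1-3) \<open>x \<in> I\<close> \<open>j \<in> J\<close>] by (rule sym)
    finally show ?thesis .
  qed
  have bound: "r ^ n * matpow J N n i j
      \<le> (\<Sum>k\<in>I. V k j / V x i * (r ^ n * matpow I M n x k))" for n
  proof -
    have "r ^ n * matpow J N n i j \<le> r ^ n * ((\<Sum>k\<in>I. matpow I M n x k * V k j) / V x i)"
      using dominated[of n] Vxi \<open>r \<ge> 0\<close>
      by (intro mult_left_mono) (simp_all add: pos_le_divide_eq mult.commute)
    also have "\<dots> = (\<Sum>k\<in>I. V k j / V x i * (r ^ n * matpow I M n x k))"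
      by (simp add: sum_divide_distrib sum_distrib_left mult_ac)
    finally show ?thesis .
  qed
  show ?thesis
  proof (rule summable_comparison_test')
    show "summable (\<lambda>n. \<Sum>k\<in>I. V k j / V x i * (r ^ n * matpow I M n x k))"
      using summable_M \<open>x \<in> I\<close> by (intro summable_sum summable_mult) auto
    show "norm (r ^ n * matpow J N n i j) \<le> (\<Sum>k\<in>I. V k j / V x i * (r ^ n * matpow I M n x k))"
      for n
      using bound[of n] \<open>r \<ge> 0\<close> by (simp add: matpow_nonneg N_nonneg)
  qed
qed

lemma cp_eq_of_intertwined:
  assumes "finite I" "finite J"
    and "\<And>x y. x \<in> I \<Longrightarrow> y \<in> J \<Longrightarrow> (\<Sum>k\<in>I. M x k * V k y) = (\<Sum>k\<in>J. V x k * N k y)"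
    and "\<And>x y. M x y \<ge> 0" "\<And>x y. N x y \<ge> 0" "\<And>x y. V x y \<ge> 0"
    and "\<And>y. y \<in> I \<Longrightarrow> \<exists>j\<in>J. V y j > 0"
    and "\<And>i. i \<in> J \<Longrightarrow> \<exists>x\<in>I. V x i > 0"
  shows "cp I M = cp J N"
proof -
  have "r \<ge> 0 \<and> (\<forall>x\<in>I. \<forall>y\<in>I. summable (\<lambda>n. r ^ n * matpow I M n x y))
    \<longleftrightarrow> r \<ge> 0 \<and> (\<forall>i\<in>J. \<forall>j\<in>J. summable (\<lambda>n. r ^ n * matpow J N n i j))" for r
  proof (intro conj_cong refl iffI ballI)
    show "summable (\<lambda>n. r ^ n * matpow J N n i j)"
      if "r \<ge> 0" "\<forall>x\<in>I. \<forall>y\<in>I. summable (\<lambda>n. r ^ n * matpow I M n x y)" "i \<in> J" "j \<in> J"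
      for i j
      using summable_matpow_of_intertwined_right[OF assms(1-3,5-6,8) that] .
    show "summable (\<lambda>n. r ^ n * matpow I M n x y)"
      if "r \<ge> 0" "\<forall>i\<in>J. \<forall>j\<in>J. summable (\<lambda>n. r ^ n * matpow J N n i j)" "x \<in> I" "y \<in> I"
      for x y
      using summable_matpow_of_intertwined_left[OF assms(1-4,6-7) that] .
  qed
  then show ?thesis
    unfolding cp_def by (simp only:)
qed


lemma finite_dirs [simp]: "finite dirs"
  by (simp add: dirs_def)

lemma div_in_dirs:
  fixes t c :: int
  assumes "c > 0" "-c \<le> t" "t \<le> c"
  shows "t div c \<in> dirs"
proof -
  have "-1 \<le> t div c"
    using zdiv_mono1[OF \<open>-c \<le> t\<close> \<open>c > 0\<close>] \<open>c > 0\<close> by (simp add: zdiv_zminus1_eq_if)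
  moreover have "t div c \<le> 1"
    using zdiv_mono1[OF \<open>t \<le> c\<close> \<open>c > 0\<close>] \<open>c > 0\<close> by simp
  ultimately show ?thesis
    unfolding dirs_def by auto
qed

lemma bij_betw_shift_dirs:
  fixes c m :: nat
  assumes "m < c"
  defines "u \<equiv> \<lambda>p. int c * snd p + int (fst p) - int m"
  shows "bij_betw u {p \<in> {0..<c} \<times> dirs. u p \<in> dirs} dirs"
proof -
  define v where "v k = (nat ((k + int m) mod int c), (k + int m) div int c)" for k
  have "v (u p) = p" if "p \<in> {0..<c} \<times> dirs" for p
    using that by (auto simp: u_def v_def)
  moreover have "u (v k) = k" and "v k \<in> {p \<in> {0..<c} \<times> dirs. u p \<in> dirs}"
    if "k \<in> dirs" for k
  proof -
    show "u (v k) = k"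
      using \<open>m < c\<close> by (simp add: u_def v_def algebra_simps)
    moreover have "(k + int m) div int c \<in> dirs"
      using that \<open>m < c\<close> by (intro div_in_dirs) (auto simp: dirs_def)
    ultimately show "v k \<in> {p \<in> {0..<c} \<times> dirs. u p \<in> dirs}"
      using that \<open>m < c\<close> by (auto simp: v_def nat_less_iff)
  qed
  ultimately show ?thesis
    by (intro bij_betw_byWitness[where f' = v]) (simp_all add: image_subset_iff)
qed

lemma sum_shift_dirs:
  fixes c m :: nat and f :: "int \<Rightarrow> 'b::comm_monoid_add"
  assumes "m < c"
  shows "(\<Sum>m'\<in>{0..<c}. \<Sum>i\<in>dirs. if int c * i + int m' - int m \<in> dirs
            then f (int c * i + int m' - int m) else 0) = (\<Sum>k\<in>dirs. f k)"
proof -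
  let ?u = "\<lambda>p. int c * snd p + int (fst p) - int m"
  have "(\<Sum>m'\<in>{0..<c}. \<Sum>i\<in>dirs. if int c * i + int m' - int m \<in> dirs
            then f (int c * i + int m' - int m) else 0)
      = (\<Sum>p\<in>{0..<c} \<times> dirs. if ?u p \<in> dirs then f (?u p) else 0)"
    by (simp add: sum.cartesian_product split_def)
  also have "\<dots> = (\<Sum>p\<in>{p \<in> {0..<c} \<times> dirs. ?u p \<in> dirs}. f (?u p))"
    by (simp add: sum.inter_filter)
  also have "\<dots> = (\<Sum>k\<in>dirs. f k)"
    using sum.reindex_bij_betw[OF bij_betw_shift_dirs[OF assms]] .
  finally show ?thesis .
qed

lemma sum_shift_dirs2:
  fixes c1 c2 m1 m2 :: nat and f :: "int \<Rightarrow> int \<Rightarrow> 'b::comm_monoid_add"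
  assumes "m1 < c1" "m2 < c2"
  shows "(\<Sum>m1'\<in>{0..<c1}. \<Sum>m2'\<in>{0..<c2}. \<Sum>i\<in>dirs. \<Sum>j\<in>dirs.
            let u1 = int c1 * i + int m1' - int m1; u2 = int c2 * j + int m2' - int m2
            in if u1 \<in> dirs \<and> u2 \<in> dirs then f u1 u2 else 0)
       = (\<Sum>k\<in>dirs. \<Sum>l\<in>dirs. f k l)"
proof -
  have "(\<Sum>m1'\<in>{0..<c1}. \<Sum>m2'\<in>{0..<c2}. \<Sum>i\<in>dirs. \<Sum>j\<in>dirs.
            let u1 = int c1 * i + int m1' - int m1; u2 = int c2 * j + int m2' - int m2
            in if u1 \<in> dirs \<and> u2 \<in> dirs then f u1 u2 else 0)
      = (\<Sum>m1'\<in>{0..<c1}. \<Sum>i\<in>dirs. if int c1 * i + int m1' - int m1 \<in> dirs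
          then (\<Sum>m2'\<in>{0..<c2}. \<Sum>j\<in>dirs. if int c2 * j + int m2' - int m2 \<in> dirs
            then f (int c1 * i + int m1' - int m1) (int c2 * j + int m2' - int m2) else 0)
          else 0)"
    by (intro sum.cong refl, subst sum.swap) (auto simp: Let_def intro!: sum.cong)
  also have "\<dots> = (\<Sum>m1'\<in>{0..<c1}. \<Sum>i\<in>dirs. if int c1 * i + int m1' - int m1 \<in> dirs
          then (\<Sum>l\<in>dirs. f (int c1 * i + int m1' - int m1) l) else 0)"
    by (intro sum.cong refl if_cong sum_shift_dirs[OF assms(2)])
  also have "\<dots> = (\<Sum>k\<in>dirs. \<Sum>l\<in>dirs. f k l)"
    by (rule sum_shift_dirs[OF assms(1)])
  finally show ?thesis .
qed

definition cweight :: "real \<Rightarrow> real \<Rightarrow> nat \<times> nat \<times> 's \<Rightarrow> 's \<Rightarrow> real" where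
  "cweight t1 t2 = (\<lambda>(m1, m2, s) s'. if s = s' then exp (real m1 * t1 + real m2 * t2) else 0)"

lemma cAstar_entry_weighted:
  fixes A :: "int \<Rightarrow> int \<Rightarrow> 's::finite \<Rightarrow> 's \<Rightarrow> real"
  shows "cAstar A c1 c2 (real c1 * t1) (real c2 * t2) (m1, m2, s) (m1', m2', s')
           * exp (real m1' * t1 + real m2' * t2)
       = (\<Sum>i\<in>dirs. \<Sum>j\<in>dirs.
            let u1 = int c1 * i + int m1' - int m1; u2 = int c2 * j + int m2' - int m2
            in if u1 \<in> dirs \<and> u2 \<in> dirs
               then exp (real m1 * t1 + real m2 * t2)
                    * (exp (real_of_int u1 * t1 + real_of_int u2 * t2) * A u1 u2 s s')
               else 0)"
proof -
  have shift_exp: "exp (real_of_int i * (real c1 * t1) + real_of_int j * (real c2 * t2)) * a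
        * exp (real m1' * t1 + real m2' * t2)
      = exp (real m1 * t1 + real m2 * t2)
        * (exp (real_of_int (int c1 * i + int m1' - int m1) * t1
               + real_of_int (int c2 * j + int m2' - int m2) * t2) * a)" for i j a
    by (simp add: mult_exp_exp algebra_simps)
  show ?thesis
    unfolding cAstar_def sum_distrib_right
    by (intro sum.cong refl) (simp add: cA_def Let_def shift_exp)
qed

lemma cAstar_cweight_eq_cweight_Astar:
  fixes A :: "int \<Rightarrow> int \<Rightarrow> 's::finite \<Rightarrow> 's \<Rightarrow> real"
  assumes "x \<in> cIdx c1 c2"
  shows "(\<Sum>k\<in>cIdx c1 c2. cAstar A c1 c2 (real c1 * t1) (real c2 * t2) x k * cweight t1 t2 k s')
       = (\<Sum>s\<in>UNIV. cweight t1 t2 x s * Astar A t1 t2 s s')"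
proof -
  obtain m1 m2 s where x: "x = (m1, m2, s)" and "m1 < c1" "m2 < c2"
    using assms unfolding cIdx_def by auto
  let ?C = "cAstar A c1 c2 (real c1 * t1) (real c2 * t2)"
  have "(\<Sum>k\<in>cIdx c1 c2. ?C x k * cweight t1 t2 k s')
      = (\<Sum>m1'\<in>{0..<c1}. \<Sum>m2'\<in>{0..<c2}.
           ?C (m1, m2, s) (m1', m2', s') * exp (real m1' * t1 + real m2' * t2))"
    by (simp add: x cIdx_def cweight_def sum.cartesian_product' if_distrib cong: if_cong)
  also have "\<dots> = (\<Sum>k\<in>dirs. \<Sum>l\<in>dirs. exp (real m1 * t1 + real m2 * t2)
                        * (exp (real_of_int k * t1 + real_of_int l * t2) * A k l s s'))"
    unfolding cAstar_entry_weighted by (rule sum_shift_dirs2[OF \<open>m1 < c1\<close> \<open>m2 < c2\<close>])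
  also have "\<dots> = (\<Sum>s''\<in>UNIV. cweight t1 t2 x s'' * Astar A t1 t2 s'' s')"
    by (simp add: x cweight_def Astar_def sum_distrib_left if_distrib if_distribR cong: if_cong)
  finally show ?thesis .
qed

lemma Astar_nonneg: "blocks_ok A \<Longrightarrow> Astar A t1 t2 s s' \<ge> 0"
  unfolding blocks_ok_def Astar_def by (auto intro!: sum_nonneg)

lemma cAstar_nonneg: "blocks_ok A \<Longrightarrow> cAstar A c1 c2 t1 t2 x y \<ge> 0"
  unfolding blocks_ok_def cAstar_def cA_def by (auto intro!: sum_nonneg simp: Let_def split: prod.splits)

lemma cweight_nonneg: "cweight t1 t2 x s \<ge> 0"
  by (simp add: cweight_def split: prod.splits)

lemma cweight_pos: "cweight t1 t2 x (snd (snd x)) > 0"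
  by (simp add: cweight_def split: prod.splits)

lemma finite_cIdx: "finite (cIdx c1 c2 :: (nat \<times> nat \<times> 's::finite) set)"
  by (simp add: cIdx_def)

theorem proposition5p1:
  fixes A :: "int \<Rightarrow> int \<Rightarrow> 's::finite \<Rightarrow> 's \<Rightarrow> real"
    and \<pi> :: "'s \<Rightarrow> real"
    and c1 c2 :: nat
    and \<theta>1 \<theta>2 :: real
  assumes "blocks_ok A"
    and "irreducible_on UNIV (transP A)"
    and "aperiodic_on UNIV (transP A)"
    and "stationary A \<pi>"
    and "drift1 A \<pi> < 0 \<or> drift2 A \<pi> < 0"
    and "irreducible_on Splus (transP A)"
    and "c1 > 0" and "c2 > 0"
  shows "cp UNIV (Astar A \<theta>1 \<theta>2)
       = cp (cIdx c1 c2) (cAstar A c1 c2 (real c1 * \<theta>1) (real c2 * \<theta>2))"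
proof (rule sym, rule cp_eq_of_intertwined[where V = "cweight \<theta>1 \<theta>2"])
  show "\<exists>s\<in>UNIV. cweight \<theta>1 \<theta>2 x s > 0" for x :: "nat \<times> nat \<times> 's"
    using cweight_pos by blast
  show "\<exists>x\<in>cIdx c1 c2. cweight \<theta>1 \<theta>2 x s > 0" for s
    using \<open>c1 > 0\<close> \<open>c2 > 0\<close> cweight_pos[of \<theta>1 \<theta>2 "(0, 0, s)"]
    by (intro bexI[of _ "(0, 0, s)"]) (auto simp: cIdx_def)
qed (simp_all add: \<open>blocks_ok A\<close> finite_cIdx cAstar_cweight_eq_cweight_Astar
       Astar_nonneg cAstar_nonneg cweight_nonneg)

end
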